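(* For a set $\mathcal{R}$ of languages over $\Sigma$ and a regular language $R\subseteq\Sigma^*$ let $\mathcal{R}\,\dot\cap\,R=\{L\cap R\mid L\in\mathcal{R}\}$. (1) Rational sets of regular languages are not closed under point-wise intersection: there exist a rational set of regular languages $\mathcal{R}$ and a regular $R$ such that $\mathcal{R}\,\dot\cap\,R$ is not a rational set of regular languages. (2) If $\mathcal{R}$ is a finite rational set of regular languages and $R$ is regular, then $\mathcal{R}\,\dot\cap\,R$ is a finite rational set of regular languages. (3) In the latter case a different language substitution is in general required: there exist an alphabet $\Delta$, a regular language substitution $\varphi:\Delta\to2^{\Sigma^*}$, a regular $K\subseteq\Delta^+$ with $\mathcal{R}=(K,\varphi)$ finite, and a regular $R\subseteq\Sigma^*$ such that there is no regular $K'\subseteq\Delta^+$ with $\mathcal{R}\,\dot\cap\,R=(K',\varphi)$.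
   Context: Alphabets are nonempty finite sets. A regular language substitution $\varphi:\Delta\to2^{\Sigma^*}$ maps each symbol to a regular language over $\Sigma$, extended by $\varphi(\delta w)=\varphi(\delta)\varphi(w)$. A set $\mathcal{R}$ of regular languages over $\Sigma$ is a rational set of regular languages, written $\mathcal{R}=(K,\varphi)$, if there are an alphabet $\Delta$, a regular $K\subseteq\Delta^+$ and a regular language substitution $\varphi$ with $\mathcal{R}=\{\varphi(w)\mid w\in K\}$. *)

theory Defs
  imports Main
begin

definition alphabet :: "'a set \<Rightarrow> bool" where
  "alphabet A \<longleftrightarrow> finite A \<and> A \<noteq> {}"

definition conc :: "'a list set \<Rightarrow> 'a list set \<Rightarrow> 'a list set" where
  "conc A B = {u @ v | u v. u \<in> A \<and> v \<in> B}"

definition kstar :: "'a list set \<Rightarrow> 'a list set" where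
  "kstar A = {concat ws | ws. set ws \<subseteq> A}"

inductive regular :: "'a set \<Rightarrow> 'a list set \<Rightarrow> bool" for Sig where
  reg_empty: "regular Sig {}"
| reg_eps: "regular Sig {[]}"
| reg_sym: "a \<in> Sig \<Longrightarrow> regular Sig {[a]}"
| reg_union: "regular Sig A \<Longrightarrow> regular Sig B \<Longrightarrow> regular Sig (A \<union> B)"
| reg_conc: "regular Sig A \<Longrightarrow> regular Sig B \<Longrightarrow> regular Sig (conc A B)"
| reg_star: "regular Sig A \<Longrightarrow> regular Sig (kstar A)"

definition subst_word :: "('d \<Rightarrow> 'a list set) \<Rightarrow> 'd list \<Rightarrow> 'a list set" where
  "subst_word phi w = foldr (\<lambda>d L. conc (phi d) L) w {[]}"

definition rational_by ::
  "'a set \<Rightarrow> 'd set \<Rightarrow> 'd list set \<Rightarrow> ('d \<Rightarrow> 'a list set) \<Rightarrow> 'a list set set \<Rightarrow> bool" where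
  "rational_by Sig Delta K phi RR \<longleftrightarrow>
     alphabet Delta \<and> regular Delta K \<and> [] \<notin> K \<and>
     (\<forall>d\<in>Delta. regular Sig (phi d)) \<and>
     RR = subst_word phi ` K"

text \<open>Rational sets of regular languages over \<open>Sig\<close>. Since any finite alphabet can be
  encoded by natural numbers, the auxiliary alphabet Delta is taken to be a set of naturals.\<close>
definition rational_set :: "'a set \<Rightarrow> 'a list set set \<Rightarrow> bool" where
  "rational_set Sig RR \<longleftrightarrow> (\<exists>(Delta::nat set) K phi. rational_by Sig Delta K phi RR)"

definition pint :: "'a list set set \<Rightarrow> 'a list set \<Rightarrow> 'a list set set" where
  "pint RR R = (\<lambda>L. L \<inter> R) ` RR"

end

theory Submission
  imports Defs
begin

text \<open>
  (1) Take \<open>\<phi>(0) = {0, 1}\<close>, \<open>K = 0\<^sup>+\<close> and \<open>R = 0\<^sup>* \<union> 1\<^sup>*\<close>. Then the point-wise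
  intersection consists of the languages \<open>{0\<^sup>n, 1\<^sup>n}\<close>, \<open>n \<ge> 1\<close>. None of them is a product of two languages other than
  \<open>{\<epsilon>}\<close>, so each of them would have to be the image of a single symbol under any
  substitution presenting the set; but a finite alphabet has only finitely many images.

  (2) Regular languages are closed under intersection (a regular language has only finitely
  many left quotients, and a language with finitely many left quotients is regular by Kleene's
  construction on its quotient automaton), and every finite set of regular languages is
  rational, with one fresh symbol per member.

  (3) With \<open>\<phi>(0) = {0}\<close> no word is mapped to the empty language, yet intersecting with
  \<open>R = \<emptyset>\<close> produces it.
\<close>

lemma subst_word_Nil [simp]: "subst_word phi [] = {[]}"
  and subst_word_Cons [simp]: "subst_word phi (d # w) = conc (phi d) (subst_word phi w)"
  by (simp_all add: subst_word_def)

lemma conc_Nil_right [simp]: "conc X {[]} = X"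
  and conc_Nil_left [simp]: "conc {[]} X = X"
  by (auto simp: conc_def)

lemma append_in_conc: "u \<in> A \<Longrightarrow> v \<in> B \<Longrightarrow> u @ v \<in> conc A B"
  unfolding conc_def by blast

lemma Nil_in_kstar [simp]: "[] \<in> kstar A"
  unfolding kstar_def by (intro CollectI exI[of _ "[]"]) simp

lemma concat_in_kstar: "set ws \<subseteq> A \<Longrightarrow> concat ws \<in> kstar A"
  unfolding kstar_def by blast

lemma regular_subset_lists: "regular Sig A \<Longrightarrow> A \<subseteq> lists Sig"
proof (induction rule: regular.induct)
  case (reg_conc A B)
  then show ?case unfolding conc_def by fastforce
next
  case (reg_star A)
  have "concat ws \<in> lists Sig" if "set ws \<subseteq> A" for ws :: "'a list list"
    using that reg_star.IH by (induction ws) auto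
  then show ?case unfolding kstar_def by blast
qed auto

lemma regular_singleton: "w \<in> lists Sig \<Longrightarrow> regular Sig {w}"
proof (induction w)
  case Nil
  show ?case by (rule reg_eps)
next
  case (Cons a w)
  have "{a # w} = conc {[a]} {w}" by (auto simp: conc_def)
  with Cons show ?case by (simp add: reg_sym reg_conc)
qed

lemma regular_finite: "finite S \<Longrightarrow> S \<subseteq> lists Sig \<Longrightarrow> regular Sig S"
proof (induction rule: finite_induct)
  case empty
  show ?case by (rule reg_empty)
next
  case (insert x F)
  then show ?case
    using reg_union[OF regular_singleton[of x Sig], of F] by simp
qed

lemma regular_Union: "finite F \<Longrightarrow> \<forall>X\<in>F. regular Sig X \<Longrightarrow> regular Sig (\<Union>F)"
  by (induction rule: finite_induct) (simp_all add: reg_empty reg_union)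

lemma regular_subst_word:
  "\<forall>d\<in>set w. regular Sig (phi d) \<Longrightarrow> regular Sig (subst_word phi w)"
  by (induction w) (simp_all add: reg_eps reg_conc)

section \<open>Left quotients\<close>

definition left_quotient :: "'a list set \<Rightarrow> 'a list \<Rightarrow> 'a list set" where
  "left_quotient L u = {v. u @ v \<in> L}"

lemma left_quotient_conc:
  "left_quotient (conc A B) u =
     conc (left_quotient A u) B \<union> \<Union> (left_quotient B ` {v. \<exists>w. u = w @ v \<and> w \<in> A})"
  by (auto simp: left_quotient_def conc_def append_eq_append_conv2)

lemma append_in_kstar:
  assumes "y \<in> A" "w \<in> kstar A"
  shows "y @ w \<in> kstar A"
proof -
  from assms obtain ws where "w = concat ws" "set (y # ws) \<subseteq> A" by (auto simp: kstar_def)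
  then show ?thesis using concat_in_kstar[of "y # ws" A] by simp
qed

lemma kstar_append_split:
  assumes "u \<noteq> []" "u @ x = concat ws" "set ws \<subseteq> A"
  shows "\<exists>w v s t. u = w @ v \<and> v \<noteq> [] \<and> w \<in> kstar A \<and> v @ s \<in> A \<and> t \<in> kstar A \<and> x = s @ t"
  using assms
proof (induction ws arbitrary: u)
  case Nil
  then show ?case by simp
next
  case (Cons y ws)
  then have "u @ x = y @ concat ws" "y \<in> A" "set ws \<subseteq> A" by auto
  then obtain us where
    "u = y @ us \<and> us @ x = concat ws \<or> y = u @ us \<and> x = us @ concat ws"
    by (auto simp: append_eq_append_conv2)
  then consider s where "y = u @ s" "x = s @ concat ws"
    | us where "u = y @ us" "us \<noteq> []" "us @ x = concat ws"
    by (cases "us = []") auto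
  then show ?case
  proof cases
    case 1
    with Cons.prems \<open>y \<in> A\<close> \<open>set ws \<subseteq> A\<close> show ?thesis
      by (intro exI[of _ "[]"] exI[of _ u] exI[of _ s] exI[of _ "concat ws"])
        (simp add: concat_in_kstar)
  next
    case 2
    from Cons.IH[OF 2(2,3) \<open>set ws \<subseteq> A\<close>] obtain w v s t where
      "us = w @ v" "v \<noteq> []" "w \<in> kstar A" "v @ s \<in> A" "t \<in> kstar A" "x = s @ t"
      by blast
    with 2(1) \<open>y \<in> A\<close> show ?thesis
      by (intro exI[of _ "y @ w"] exI[of _ v] exI[of _ s] exI[of _ t]) (simp add: append_in_kstar)
  qed
qed

lemma left_quotient_kstar:
  assumes "u \<noteq> []"
  shows "left_quotient (kstar A) u =
    (\<Union>v \<in> {v. \<exists>w. u = w @ v \<and> v \<noteq> [] \<and> w \<in> kstar A}. conc (left_quotient A v) (kstar A))"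
proof (intro set_eqI iffI)
  fix x assume "x \<in> left_quotient (kstar A) u"
  then obtain ws where "u @ x = concat ws" "set ws \<subseteq> A"
    by (auto simp: left_quotient_def kstar_def)
  from kstar_append_split[OF assms this] show
    "x \<in> (\<Union>v \<in> {v. \<exists>w. u = w @ v \<and> v \<noteq> [] \<and> w \<in> kstar A}. conc (left_quotient A v) (kstar A))"
    by (auto simp: left_quotient_def conc_def)
next
  fix x assume "x \<in> (\<Union>v \<in> {v. \<exists>w. u = w @ v \<and> v \<noteq> [] \<and> w \<in> kstar A}. conc (left_quotient A v) (kstar A))"
  then obtain w v s t where "u = w @ v" "w \<in> kstar A" "v @ s \<in> A" "t \<in> kstar A" "x = s @ t"
    by (auto simp: left_quotient_def conc_def)
  then obtain ws1 ws2 where "u @ x = concat (ws1 @ [v @ s] @ ws2)" "set (ws1 @ [v @ s] @ ws2) \<subseteq> A"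
    by (auto simp: kstar_def)
  then show "x \<in> left_quotient (kstar A) u"
    unfolding left_quotient_def by (metis concat_in_kstar mem_Collect_eq)
qed

lemma left_quotient_Nil [simp]: "left_quotient L [] = L"
  by (simp add: left_quotient_def)

lemma finite_left_quotients: "regular Sig L \<Longrightarrow> finite (range (left_quotient L))"
proof (induction rule: regular.induct)
  case reg_empty
  have "range (left_quotient {}) \<subseteq> {{}}" by (auto simp: left_quotient_def)
  then show ?case by (rule finite_subset) simp
next
  case reg_eps
  have "range (left_quotient {[]}) \<subseteq> {{[]}, {}}" by (auto simp: left_quotient_def)
  then show ?case by (rule finite_subset) simp
next
  case (reg_sym a)
  have "left_quotient {[a]} u \<in> {{[a]}, {[]}, {}}" for u
    by (cases u) (auto simp: left_quotient_def)
  then have "range (left_quotient {[a]}) \<subseteq> {{[a]}, {[]}, {}}" by blast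
  then show ?case by (rule finite_subset) simp
next
  case (reg_union A B)
  have "left_quotient (A \<union> B) u = left_quotient A u \<union> left_quotient B u" for u
    by (auto simp: left_quotient_def)
  then have "range (left_quotient (A \<union> B)) \<subseteq>
    (\<lambda>(X, Y). X \<union> Y) ` (range (left_quotient A) \<times> range (left_quotient B))"
    by (auto intro!: image_eqI)
  then show ?case by (rule finite_subset) (use reg_union.IH in simp)
next
  case (reg_conc A B)
  have "range (left_quotient (conc A B)) \<subseteq>
    (\<lambda>(X, S). conc X B \<union> \<Union>S) ` (range (left_quotient A) \<times> Pow (range (left_quotient B)))"
    unfolding left_quotient_conc
    by (auto intro!: image_eqI[of _ _ "(left_quotient A _, left_quotient B ` {v. \<exists>w. _ = w @ v \<and> w \<in> A})"])
  then show ?case by (rule finite_subset) (use reg_conc.IH in simp)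
next
  case (reg_star A)
  have "range (left_quotient (kstar A)) \<subseteq>
    insert (kstar A) ((\<lambda>S. \<Union>X\<in>S. conc X (kstar A)) ` Pow (range (left_quotient A)))"
  proof
    fix M assume "M \<in> range (left_quotient (kstar A))"
    then obtain u where M: "M = left_quotient (kstar A) u" by blast
    show "M \<in> insert (kstar A) ((\<lambda>S. \<Union>X\<in>S. conc X (kstar A)) ` Pow (range (left_quotient A)))"
    proof (cases "u = []")
      case False
      then show ?thesis unfolding M left_quotient_kstar[OF False]
        by (intro insertI2 image_eqI[of _ _ "left_quotient A ` {v. \<exists>w. u = w @ v \<and> v \<noteq> [] \<and> w \<in> kstar A}"]) auto
    qed (simp add: M)
  qed
  then show ?case by (rule finite_subset) (use reg_star.IH in simp)
qed

section \<open>Kleene's construction\<close>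

fun run :: "('s \<Rightarrow> 'a \<Rightarrow> 's) \<Rightarrow> 's \<Rightarrow> 'a list \<Rightarrow> 's" where
  "run d p [] = p"
| "run d p (a # w) = run d (d p a) w"

lemma run_append [simp]: "run d p (x @ y) = run d (run d p x) y"
  by (induction x arbitrary: p) auto

text \<open>Kleene's languages \<open>R\<^sup>T\<^sub>p\<^sub>q\<close>: the endpoints \<open>p\<close>, \<open>q\<close> need not lie in \<open>T\<close>.\<close>
definition paths_via :: "'a set \<Rightarrow> ('s \<Rightarrow> 'a \<Rightarrow> 's) \<Rightarrow> 's set \<Rightarrow> 's \<Rightarrow> 's \<Rightarrow> 'a list set" where
  "paths_via Sig d T p q = {w \<in> lists Sig. run d p w = q \<and>
     (\<forall>i. 0 < i \<and> i < length w \<longrightarrow> run d p (take i w) \<in> T)}"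

lemma paths_via_mono: "T \<subseteq> T' \<Longrightarrow> paths_via Sig d T p q \<subseteq> paths_via Sig d T' p q"
  unfolding paths_via_def by blast

lemma Nil_in_paths_via: "[] \<in> paths_via Sig d T p p"
  unfolding paths_via_def by simp

lemma append_in_paths_via:
  assumes x: "x \<in> paths_via Sig d T p r" and y: "y \<in> paths_via Sig d T r q" and "r \<in> T"
  shows "x @ y \<in> paths_via Sig d T p q"
proof -
  have "run d p (take i (x @ y)) \<in> T" if "0 < i" "i < length (x @ y)" for i
  proof (cases "i \<le> length x")
    case True
    with that x \<open>r \<in> T\<close> show ?thesis
      by (cases "i = length x") (auto simp: paths_via_def)
  next
    case False
    then have "take i (x @ y) = x @ take (i - length x) y" by simp
    with False that x y show ?thesis by (auto simp: paths_via_def)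
  qed
  with x y show ?thesis by (auto simp: paths_via_def)
qed

lemma concat_in_paths_via:
  "set ys \<subseteq> paths_via Sig d T t t \<Longrightarrow> t \<in> T \<Longrightarrow> concat ys \<in> paths_via Sig d T t t"
  by (induction ys) (auto intro: Nil_in_paths_via append_in_paths_via)

lemma take_in_paths_via:
  assumes "w \<in> paths_via Sig d T' p q" "i \<le> length w"
    and "\<And>j. 0 < j \<Longrightarrow> j < i \<Longrightarrow> run d p (take j w) \<in> T"
  shows "take i w \<in> paths_via Sig d T p (run d p (take i w))"
  using assms by (auto simp: paths_via_def min_def dest: in_set_takeD)

lemma drop_in_paths_via:
  assumes w: "w \<in> paths_via Sig d T p q" and "i \<le> length w"
  shows "drop i w \<in> paths_via Sig d T (run d p (take i w)) q"
proof -
  have "run d p w = run d (run d p (take i w)) (drop i w)"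
    by (metis append_take_drop_id run_append)
  moreover have "run d (run d p (take i w)) (take j (drop i w)) \<in> T"
    if "0 < j" "j < length (drop i w)" for j
  proof -
    have "run d (run d p (take i w)) (take j (drop i w)) = run d p (take (i + j) w)"
      by (simp add: take_add)
    with w that show ?thesis by (auto simp: paths_via_def)
  qed
  ultimately show ?thesis
    using w by (auto simp: paths_via_def dest: in_set_dropD)
qed

lemma paths_via_insert_first_visit:
  assumes w: "w \<in> paths_via Sig d (insert t T) p q"
  shows "w \<in> paths_via Sig d T p q \<or>
    (\<exists>x y. w = x @ y \<and> x \<noteq> [] \<and> x \<in> paths_via Sig d T p t \<and> y \<in> paths_via Sig d (insert t T) t q)"
proof (cases "\<exists>i. 0 < i \<and> i < length w \<and> run d p (take i w) = t")
  case False
  with w show ?thesis unfolding paths_via_def by blast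
next
  case True
  define i where "i = (LEAST i. 0 < i \<and> i < length w \<and> run d p (take i w) = t)"
  have i: "0 < i" "i < length w" "run d p (take i w) = t"
    using LeastI_ex[OF True] unfolding i_def by auto
  have "run d p (take j w) \<in> T" if "0 < j" "j < i" for j
  proof -
    have "run d p (take j w) \<noteq> t"
      using not_less_Least[of j "\<lambda>i. 0 < i \<and> i < length w \<and> run d p (take i w) = t"] that i(2)
      unfolding i_def by auto
    with w that i(2) show ?thesis by (auto simp: paths_via_def)
  qed
  then have "take i w \<in> paths_via Sig d T p t"
    using take_in_paths_via[OF w] i by fastforce
  moreover have "drop i w \<in> paths_via Sig d (insert t T) t q"
    using drop_in_paths_via[OF w] i by fastforce
  moreover have "take i w \<noteq> []" using i by auto
  ultimately show ?thesis
    by (intro disjI2 exI[of _ "take i w"] exI[of _ "drop i w"]) simp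
qed

lemma paths_via_insert_loops:
  "w \<in> paths_via Sig d (insert t T) t q \<Longrightarrow>
    w \<in> conc (kstar (paths_via Sig d T t t)) (paths_via Sig d T t q)"
proof (induction "length w" arbitrary: w rule: less_induct)
  case less
  from paths_via_insert_first_visit[OF less.prems] show ?case
  proof
    assume "w \<in> paths_via Sig d T t q"
    then show ?thesis using append_in_conc[OF Nil_in_kstar, of w] by simp
  next
    assume "\<exists>x y. w = x @ y \<and> x \<noteq> [] \<and> x \<in> paths_via Sig d T t t \<and> y \<in> paths_via Sig d (insert t T) t q"
    then obtain x y where w: "w = x @ y" "x \<noteq> []" and x: "x \<in> paths_via Sig d T t t"
      and y: "y \<in> paths_via Sig d (insert t T) t q"
      by blast
    from w have "length y < length w" by simp
    from less.hyps[OF this y] obtain a b where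
      "y = a @ b" "a \<in> kstar (paths_via Sig d T t t)" "b \<in> paths_via Sig d T t q"
      by (auto simp: conc_def)
    moreover from x this(2) have "x @ a \<in> kstar (paths_via Sig d T t t)"
      by (rule append_in_kstar)
    ultimately show ?thesis using w(1) append_in_conc[of "x @ a" _ b] by simp
  qed
qed

lemma paths_via_insert:
  "paths_via Sig d (insert t T) p q = paths_via Sig d T p q \<union>
     conc (paths_via Sig d T p t) (conc (kstar (paths_via Sig d T t t)) (paths_via Sig d T t q))"
proof (intro set_eqI iffI)
  fix w assume "w \<in> paths_via Sig d (insert t T) p q"
  from paths_via_insert_first_visit[OF this]
  show "w \<in> paths_via Sig d T p q \<union>
     conc (paths_via Sig d T p t) (conc (kstar (paths_via Sig d T t t)) (paths_via Sig d T t q))"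
  proof
    assume "\<exists>x y. w = x @ y \<and> x \<noteq> [] \<and> x \<in> paths_via Sig d T p t \<and> y \<in> paths_via Sig d (insert t T) t q"
    then obtain x y where "w = x @ y" "x \<in> paths_via Sig d T p t"
      "y \<in> paths_via Sig d (insert t T) t q"
      by blast
    then show ?thesis by (blast intro: append_in_conc paths_via_insert_loops)
  qed simp
next
  have sub: "paths_via Sig d T a b \<subseteq> paths_via Sig d (insert t T) a b" for a b
    by (rule paths_via_mono) blast
  fix w assume "w \<in> paths_via Sig d T p q \<union>
     conc (paths_via Sig d T p t) (conc (kstar (paths_via Sig d T t t)) (paths_via Sig d T t q))"
  then show "w \<in> paths_via Sig d (insert t T) p q"
  proof
    assume "w \<in> conc (paths_via Sig d T p t) (conc (kstar (paths_via Sig d T t t)) (paths_via Sig d T t q))"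
    then obtain x ys z where w: "w = x @ concat ys @ z" and "x \<in> paths_via Sig d T p t"
      "set ys \<subseteq> paths_via Sig d T t t" "z \<in> paths_via Sig d T t q"
      unfolding conc_def kstar_def by blast
    with sub have "x \<in> paths_via Sig d (insert t T) p t"
      "concat ys \<in> paths_via Sig d (insert t T) t t" "z \<in> paths_via Sig d (insert t T) t q"
      by (blast intro: concat_in_paths_via)+
    then show ?thesis unfolding w by (blast intro: append_in_paths_via)
  qed (use sub in blast)
qed

lemma regular_paths_via_empty:
  assumes "finite Sig"
  shows "regular Sig (paths_via Sig d {} p q)"
proof (rule regular_finite)
  have "length w \<le> 1" if "w \<in> paths_via Sig d {} p q" for w
  proof (rule ccontr)
    assume "\<not> length w \<le> 1"
    then have "0 < (1::nat) \<and> 1 < length w" by simp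
    with that show False unfolding paths_via_def by blast
  qed
  then have "paths_via Sig d {} p q \<subseteq> {w. set w \<subseteq> Sig \<and> length w \<le> 1}"
    by (auto simp: paths_via_def)
  then show "finite (paths_via Sig d {} p q)"
    using finite_lists_length_le[OF assms, of 1] by (rule finite_subset)
  show "paths_via Sig d {} p q \<subseteq> lists Sig" by (auto simp: paths_via_def)
qed

lemma regular_paths_via:
  assumes "finite Sig" "finite T"
  shows "regular Sig (paths_via Sig d T p q)"
  using assms(2)
proof (induction arbitrary: p q rule: finite_induct)
  case empty
  show ?case by (rule regular_paths_via_empty[OF assms(1)])
next
  case (insert t T)
  show ?case unfolding paths_via_insert
    by (intro reg_union reg_conc reg_star insert.IH)
qed

lemma run_left_quotient: "run (\<lambda>X a. left_quotient X [a]) X w = left_quotient X w"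
  by (induction w arbitrary: X) (auto simp: left_quotient_def)

text \<open>Kleene's construction on the automaton whose states are the left quotients of \<open>L\<close>.\<close>
lemma regular_if_finite_left_quotients:
  assumes Sig: "finite Sig" and L: "L \<subseteq> lists Sig" and fin: "finite (range (left_quotient L))"
  shows "regular Sig L"
proof -
  define d where "d = (\<lambda>X (a::'a). left_quotient X [a])"
  define S where "S = range (left_quotient L)"
  have run_d: "run d L w = left_quotient L w" for w
    unfolding d_def by (rule run_left_quotient)
  have "L = (\<Union>q \<in> {q \<in> S. [] \<in> q}. paths_via Sig d S L q)"
  proof (intro set_eqI iffI)
    fix w assume w: "w \<in> L"
    then have "[] \<in> left_quotient L w" by (simp add: left_quotient_def)
    with w L have "w \<in> paths_via Sig d S L (left_quotient L w)" "left_quotient L w \<in> {q \<in> S. [] \<in> q}"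
      by (auto simp: paths_via_def run_d S_def)
    then show "w \<in> (\<Union>q \<in> {q \<in> S. [] \<in> q}. paths_via Sig d S L q)" by blast
  next
    fix w assume "w \<in> (\<Union>q \<in> {q \<in> S. [] \<in> q}. paths_via Sig d S L q)"
    then have "[] \<in> left_quotient L w" by (auto simp: paths_via_def run_d)
    then show "w \<in> L" by (simp add: left_quotient_def)
  qed
  moreover have "regular Sig (\<Union>q \<in> {q \<in> S. [] \<in> q}. paths_via Sig d S L q)"
    using fin unfolding S_def by (intro regular_Union) (auto intro: regular_paths_via[OF Sig])
  ultimately show ?thesis by simp
qed

lemma regular_Int:
  assumes "finite Sig" "regular Sig A" "regular Sig B"
  shows "regular Sig (A \<inter> B)"
proof (rule regular_if_finite_left_quotients[OF assms(1)])
  show "A \<inter> B \<subseteq> lists Sig" using regular_subset_lists[OF assms(2)] by blast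
  have "left_quotient (A \<inter> B) u = left_quotient A u \<inter> left_quotient B u" for u
    by (auto simp: left_quotient_def)
  then have "range (left_quotient (A \<inter> B)) \<subseteq>
    (\<lambda>(X, Y). X \<inter> Y) ` (range (left_quotient A) \<times> range (left_quotient B))"
    by auto
  moreover have "finite ((\<lambda>(X, Y). X \<inter> Y) ` (range (left_quotient A) \<times> range (left_quotient B)))"
    using finite_left_quotients[OF assms(2)] finite_left_quotients[OF assms(3)] by simp
  ultimately show "finite (range (left_quotient (A \<inter> B)))" by (rule finite_subset)
qed

section \<open>Rational sets of regular languages\<close>

lemma set_rational_by_word:
  "rational_by Sig Delta K phi RR \<Longrightarrow> w \<in> K \<Longrightarrow> set w \<subseteq> Delta"
  unfolding rational_by_def using regular_subset_lists[of Delta K] by auto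

lemma regular_if_rational_by:
  assumes "rational_by Sig Delta K phi RR" "L \<in> RR"
  shows "regular Sig L"
proof -
  from assms obtain w where "w \<in> K" "L = subst_word phi w"
    unfolding rational_by_def by blast
  with assms(1) set_rational_by_word[OF assms(1)] show ?thesis
    unfolding rational_by_def by (blast intro: regular_subst_word)
qed

lemma rational_set_if_finite:
  assumes fin: "finite F" and reg: "\<forall>L\<in>F. regular Sig L"
  shows "rational_set Sig F"
proof (cases "F = {}")
  case True
  then have "rational_by Sig {0::nat} {} (\<lambda>_. {}) F"
    unfolding rational_by_def alphabet_def by (auto intro: reg_empty)
  then show ?thesis unfolding rational_set_def by blast
next
  case False
  from finite_imp_nat_seg_image_inj_on[OF fin] obtain n and f :: "nat \<Rightarrow> 'a list set"
    where F: "F = f ` {i. i < n}" by blast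
  with False have "n > 0" by (cases n) auto
  define K where "K = (\<lambda>i. [i]) ` {i. i < n}"
  have "rational_by Sig {i. i < n} K f F"
    unfolding rational_by_def
  proof (intro conjI)
    show "alphabet {i. i < n}" using \<open>n > 0\<close> unfolding alphabet_def by auto
    show "regular {i. i < n} K" unfolding K_def by (rule regular_finite) auto
    show "[] \<notin> K" unfolding K_def by auto
    show "\<forall>d\<in>{i. i < n}. regular Sig (f d)" using reg F by auto
    show "F = subst_word f ` K" unfolding K_def F by (auto simp: image_image)
  qed
  then show ?thesis unfolding rational_set_def by blast
qed

lemma rational_set_pint_if_finite:
  assumes Sig: "alphabet Sig" and rat: "rational_set Sig RR" and fin: "finite RR"
    and R: "regular Sig R"
  shows "rational_set Sig (pint RR R) \<and> finite (pint RR R)"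
proof
  show "finite (pint RR R)" unfolding pint_def using fin by simp
  from rat obtain Delta :: "nat set" and K phi where rb: "rational_by Sig Delta K phi RR"
    unfolding rational_set_def by blast
  have "regular Sig (L \<inter> R)" if "L \<in> RR" for L
    using regular_Int[OF _ regular_if_rational_by[OF rb that] R] Sig
    unfolding alphabet_def by blast
  then have "\<forall>M\<in>pint RR R. regular Sig M" unfolding pint_def by blast
  with \<open>finite (pint RR R)\<close> show "rational_set Sig (pint RR R)"
    by (rule rational_set_if_finite)
qed

section \<open>The counterexamples\<close>

lemma set_subset_if_append_eq_replicate:
  assumes "u @ v = replicate n c"
  shows "set u \<subseteq> {c}" "set v \<subseteq> {c}"
proof -
  have "set (u @ v) \<subseteq> {c}" unfolding assms by (simp add: set_replicate_conv_if)
  then show "set u \<subseteq> {c}" "set v \<subseteq> {c}" by auto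
qed

lemma conc_eq_two_replicates_factor:
  assumes XY: "conc X Y = {replicate n c, replicate n c'}" and "c \<noteq> c'"
    and x: "x \<in> X" "x \<noteq> []" and y: "y \<in> Y" "y \<noteq> []"
  shows "x @ y \<noteq> replicate n c"
proof
  assume xy: "x @ y = replicate n c"
  have "replicate n c' \<in> conc X Y" using XY by simp
  then obtain x' y' where "x' \<in> X" "y' \<in> Y" and x'y': "x' @ y' = replicate n c'"
    by (auto simp: conc_def)
  have "x @ y' \<in> {replicate n c, replicate n c'}"
    using XY x(1) \<open>y' \<in> Y\<close> append_in_conc by blast
  then have xy': "x @ y' = replicate n c \<or> x @ y' = replicate n c'" by simp
  then have "length (x @ y') = n" by (metis length_replicate)
  with xy have "length y' = length y" by (metis length_append length_replicate add_left_cancel)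
  with y(2) have "y' \<noteq> []" by auto
  from xy' show False
  proof
    assume "x @ y' = replicate n c"
    then have "set y' \<subseteq> {c}" by (rule set_subset_if_append_eq_replicate(2))
    moreover have "set y' \<subseteq> {c'}" using x'y' by (rule set_subset_if_append_eq_replicate(2))
    ultimately show False using \<open>y' \<noteq> []\<close> \<open>c \<noteq> c'\<close> by (cases y') auto
  next
    assume "x @ y' = replicate n c'"
    then have "set x \<subseteq> {c'}" by (rule set_subset_if_append_eq_replicate(1))
    moreover have "set x \<subseteq> {c}" using xy by (rule set_subset_if_append_eq_replicate(1))
    ultimately show False using x(2) \<open>c \<noteq> c'\<close> by (cases x) auto
  qed
qed

lemma conc_eq_two_replicates:
  assumes XY: "conc X Y = {replicate n c, replicate n c'}" and "c \<noteq> c'" "n > 0"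
  shows "X = {[]} \<or> Y = {[]}"
proof (rule ccontr)
  assume "\<not> (X = {[]} \<or> Y = {[]})"
  moreover have "X \<noteq> {}" "Y \<noteq> {}" using XY by (auto simp: conc_def)
  ultimately obtain x y where x: "x \<in> X" "x \<noteq> []" and y: "y \<in> Y" "y \<noteq> []" by blast
  then have "x @ y \<in> {replicate n c, replicate n c'}" using XY append_in_conc by blast
  moreover have "x @ y \<noteq> replicate n c"
    using conc_eq_two_replicates_factor[OF XY \<open>c \<noteq> c'\<close> x y] .
  moreover have "x @ y \<noteq> replicate n c'"
    using XY \<open>c \<noteq> c'\<close> x y by (intro conc_eq_two_replicates_factor) (auto simp: insert_commute)
  ultimately show False by blast
qed

lemma subst_word_eq_two_replicates:
  assumes "subst_word phi w = {replicate n c, replicate n c'}" "c \<noteq> c'" "n > 0"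
  shows "{replicate n c, replicate n c'} \<in> phi ` set w"
  using assms(1)
proof (induction w)
  case Nil
  with \<open>n > 0\<close> show ?case by auto
next
  case (Cons d w)
  then have "conc (phi d) (subst_word phi w) = {replicate n c, replicate n c'}" by simp
  from conc_eq_two_replicates[OF this assms(2,3)] Cons show ?case by auto
qed

lemma kstar_singleton: "kstar {[c]} = range (\<lambda>m. replicate m c)"
proof (intro set_eqI iffI)
  fix w assume "w \<in> kstar {[c]}"
  then obtain ws where "w = concat ws" "set ws \<subseteq> {[c]}" by (auto simp: kstar_def)
  then have "ws = replicate (length ws) [c]"
    by (metis replicate_eqI singletonD subsetD)
  then have "w = replicate (length ws) c"
    using \<open>w = concat ws\<close> by (metis concat_replicate_single)
  then show "w \<in> range (\<lambda>m. replicate m c)" by blast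
next
  fix w assume "w \<in> range (\<lambda>m. replicate m c)"
  then obtain m where "w = replicate m c" by auto
  then show "w \<in> kstar {[c]}"
    using concat_in_kstar[of "replicate m [c]" "{[c]}"] by (simp add: set_replicate_conv_if)
qed

lemma conc_letters: "conc ((\<lambda>a. [a]) ` A) L = {a # v | a v. a \<in> A \<and> v \<in> L}"
proof (intro set_eqI iffI)
  fix w assume "w \<in> {a # v | a v. a \<in> A \<and> v \<in> L}"
  then obtain a v where "w = [a] @ v" "a \<in> A" "v \<in> L" by auto
  then show "w \<in> conc ((\<lambda>a. [a]) ` A) L" by (blast intro: append_in_conc)
qed (auto simp: conc_def)

lemma subst_word_letters:
  "subst_word (\<lambda>_. (\<lambda>a. [a]) ` A) w = {v. length v = length w \<and> set v \<subseteq> A}"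
proof (induction w)
  case (Cons d w)
  show ?case
    by (auto simp: Cons conc_letters length_Suc_conv)
qed auto

lemma inj_two_replicates: "inj (\<lambda>n. {replicate (Suc n) c, replicate (Suc n) c'})"
proof (rule injI)
  fix n m assume "{replicate (Suc n) c, replicate (Suc n) c'} = {replicate (Suc m) c, replicate (Suc m) c'}"
  then have "length ` {replicate (Suc n) c, replicate (Suc n) c'} =
      length ` {replicate (Suc m) c, replicate (Suc m) c'}"
    by simp
  then show "n = m" by simp
qed

lemma not_rational_set_two_replicates:
  assumes "c \<noteq> c'"
  shows "\<not> rational_set Sig (range (\<lambda>n. {replicate (Suc n) c, replicate (Suc n) c'}))"
    (is "\<not> rational_set Sig (range ?L)")
proof
  assume "rational_set Sig (range ?L)"
  then obtain Delta :: "nat set" and K phi where rb: "rational_by Sig Delta K phi (range ?L)"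
    unfolding rational_set_def by blast
  then have range_L: "range ?L = subst_word phi ` K" and "finite Delta"
    unfolding rational_by_def alphabet_def by blast+
  have "?L n \<in> phi ` Delta" for n
  proof -
    obtain w where "w \<in> K" and w: "subst_word phi w = ?L n"
      using rangeI[of ?L n] unfolding range_L by blast
    have "?L n \<in> phi ` set w"
      using subst_word_eq_two_replicates[OF w assms] by simp
    with set_rational_by_word[OF rb \<open>w \<in> K\<close>] show ?thesis by blast
  qed
  then have "range ?L \<subseteq> phi ` Delta" by blast
  with \<open>finite Delta\<close> have "finite (range ?L)"
    using finite_surj by blast
  then have "finite (UNIV :: nat set)"
    using inj_two_replicates by (rule finite_imageD)
  then show False by simp
qed

lemma pint_letters_replicates:
  "pint (subst_word (\<lambda>_. (\<lambda>a. [a]) ` {c, c'}) ` conc {[c]} (kstar {[c]}))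
        (kstar {[c]} \<union> kstar {[c']})
     = range (\<lambda>n. {replicate (Suc n) c, replicate (Suc n) c'})"
proof -
  have "conc {[c]} (kstar {[c]}) = range (\<lambda>n. replicate (Suc n) c)"
    by (auto simp: kstar_singleton conc_def)
  moreover have "{v. length v = n \<and> set v \<subseteq> {c, c'}} \<inter> (kstar {[c]} \<union> kstar {[c']})
      = {replicate n c, replicate n c'}" for n
    by (auto simp: kstar_singleton)
  ultimately show ?thesis
    unfolding pint_def subst_word_letters by (simp add: image_image)
qed

lemma rational_set_not_closed_under_pint:
  "\<exists>(Sig::nat set) RR R. alphabet Sig \<and> rational_set Sig RR \<and> regular Sig R \<and>
     \<not> rational_set Sig (pint RR R)"
proof (intro exI conjI)
  let ?phi = "\<lambda>_::nat. (\<lambda>a. [a]) ` {0::nat, 1}"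
  let ?K = "conc {[0::nat]} (kstar {[0]})"
  show "alphabet {0::nat, 1}" by (simp add: alphabet_def)
  have "rational_by {0::nat, 1} {0} ?K ?phi (subst_word ?phi ` ?K)"
    unfolding rational_by_def
  proof (intro conjI)
    show "regular {0::nat} ?K" by (intro reg_conc reg_star reg_sym) simp_all
    show "\<forall>d\<in>{0::nat}. regular {0::nat, 1} (?phi d)" by (simp add: regular_finite)
  qed (simp_all add: alphabet_def conc_def)
  then show "rational_set {0::nat, 1} (subst_word ?phi ` ?K)"
    unfolding rational_set_def by blast
  show "regular {0::nat, 1} (kstar {[0]} \<union> kstar {[1]})"
    by (intro reg_union reg_star reg_sym) simp_all
  show "\<not> rational_set {0::nat, 1} (pint (subst_word ?phi ` ?K) (kstar {[0]} \<union> kstar {[1]}))"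
    unfolding pint_letters_replicates by (rule not_rational_set_two_replicates) simp
qed

lemma subst_word_nonempty: "\<forall>d\<in>set w. phi d \<noteq> {} \<Longrightarrow> subst_word phi w \<noteq> {}"
  by (induction w) (auto simp: conc_def)

lemma pint_needs_other_substitution:
  "\<exists>(Sig::nat set) (Delta::nat set) phi K R.
     alphabet Sig \<and> rational_by Sig Delta K phi (subst_word phi ` K) \<and>
     finite (subst_word phi ` K) \<and> regular Sig R \<and>
     \<not> (\<exists>K'. rational_by Sig Delta K' phi (pint (subst_word phi ` K) R))"
proof (intro exI conjI)
  let ?phi = "\<lambda>_::nat. {[0::nat]}"
  show "alphabet {0::nat}" by (simp add: alphabet_def)
  show "rational_by {0::nat} {0::nat} {[0]} ?phi (subst_word ?phi ` {[0]})"
    unfolding rational_by_def alphabet_def by (auto intro: reg_sym)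
  show "finite (subst_word ?phi ` {[0]})" by simp
  show "regular {0::nat} {}" by (rule reg_empty)
  show "\<nexists>K'. rational_by {0::nat} {0::nat} K' ?phi (pint (subst_word ?phi ` {[0]}) {})"
  proof
    assume "\<exists>K'. rational_by {0::nat} {0::nat} K' ?phi (pint (subst_word ?phi ` {[0]}) {})"
    then obtain K' where "{{}} = subst_word ?phi ` K'"
      unfolding rational_by_def pint_def by auto
    then obtain w where "subst_word ?phi w = {}" by (metis imageE singletonI)
    with subst_word_nonempty[of w ?phi] show False by simp
  qed
qed

theorem proposition8:
  shows "(\<exists>(Sig::nat set) RR R. alphabet Sig \<and> rational_set Sig RR \<and> regular Sig R \<and>
            \<not> rational_set Sig (pint RR R))
       \<and> (\<forall>(Sig::'a set) RR R. alphabet Sig \<longrightarrow> rational_set Sig RR \<longrightarrow> finite RR \<longrightarrow>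
            regular Sig R \<longrightarrow> rational_set Sig (pint RR R) \<and> finite (pint RR R))
       \<and> (\<exists>(Sig::nat set) (Delta::nat set) phi K R.
            alphabet Sig \<and> rational_by Sig Delta K phi (subst_word phi ` K) \<and>
            finite (subst_word phi ` K) \<and> regular Sig R \<and>
            \<not> (\<exists>K'. rational_by Sig Delta K' phi (pint (subst_word phi ` K) R)))"
  using rational_set_not_closed_under_pint rational_set_pint_if_finite
    pint_needs_other_substitution
  by blast

end
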